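(* Let $\Omega$ be a locally compact metrisable space and $\{\mu_n\}_{n\in\mathbb{N}}\cup\{\mu\}\subset\mathcal{M}(\Omega)$. Then $\mu_n^+\to\mu^+$ weakly and $\mu_n^-\to\mu^-$ weakly if and only if $\mu_n\to\mu$ vaguely and $\limsup_{n\to\infty}\|\mu_n\|\le\|\mu\|$.
   Context: $\Omega$ carries its Borel $\sigma$-algebra. $\mathcal{M}(\Omega)$ denotes the set of finite signed Radon measures on $\Omega$: finite signed Borel measures $\mu$ with Hahn–Jordan decomposition $\mu=\mu^+-\mu^-$ whose variation $|\mu|=\mu^++\mu^-$ satisfies $|\mu|(A)=\sup\{|\mu|(K):K\subset A,\ K\text{ compact}\}$ for all Borel $A$; $\|\mu\|=|\mu|(\Omega)$. Weak convergence $\nu_n\to\nu$ means $\int f\,d\nu_n\to\int f\,d\nu$ for all bounded continuous $f:\Omega\to\mathbb{R}$; vague convergence means the same for all continuous $f$ with compact support. *)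

theory Defs
  imports "HOL-Analysis.Analysis"
begin

definition signed_measure :: "('a::topological_space set \<Rightarrow> real) \<Rightarrow> bool" where
  "signed_measure \<mu> \<longleftrightarrow> \<mu> {} = 0 \<and>
     (\<forall>A::nat \<Rightarrow> 'a set. range A \<subseteq> sets borel \<longrightarrow> disjoint_family A \<longrightarrow>
        (\<lambda>n. \<mu> (A n)) sums \<mu> (\<Union>n. A n))"

definition pos_part :: "('a::topological_space set \<Rightarrow> real) \<Rightarrow> 'a measure" where
  "pos_part \<mu> = measure_of UNIV (sets borel)
     (\<lambda>A. SUP B\<in>{B\<in>sets borel. B \<subseteq> A}. ennreal (\<mu> B))"

definition neg_part :: "('a::topological_space set \<Rightarrow> real) \<Rightarrow> 'a measure" where
  "neg_part \<mu> = pos_part (\<lambda>A. - \<mu> A)"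

definition signed_radon :: "('a::topological_space set \<Rightarrow> real) \<Rightarrow> bool" where
  "signed_radon \<mu> \<longleftrightarrow> signed_measure \<mu> \<and>
     (\<forall>A\<in>sets borel. emeasure (pos_part \<mu>) A + emeasure (neg_part \<mu>) A =
        (SUP K\<in>{K. K \<subseteq> A \<and> compact K}. emeasure (pos_part \<mu>) K + emeasure (neg_part \<mu>) K))"

definition tv_norm :: "('a::topological_space set \<Rightarrow> real) \<Rightarrow> real" where
  "tv_norm \<mu> = measure (pos_part \<mu>) UNIV + measure (neg_part \<mu>) UNIV"

definition signed_integral :: "('a::topological_space set \<Rightarrow> real) \<Rightarrow> ('a \<Rightarrow> real) \<Rightarrow> real" where
  "signed_integral \<mu> f = integral\<^sup>L (pos_part \<mu>) f - integral\<^sup>L (neg_part \<mu>) f"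

definition weak_conv :: "(nat \<Rightarrow> 'a::topological_space measure) \<Rightarrow> 'a measure \<Rightarrow> bool" where
  "weak_conv M N \<longleftrightarrow> (\<forall>f::'a \<Rightarrow> real. continuous_on UNIV f \<longrightarrow> bounded (range f) \<longrightarrow>
       (\<lambda>n. integral\<^sup>L (M n) f) \<longlonglongrightarrow> integral\<^sup>L N f)"

definition vague_conv :: "(nat \<Rightarrow> 'a::topological_space set \<Rightarrow> real) \<Rightarrow> ('a set \<Rightarrow> real) \<Rightarrow> bool" where
  "vague_conv \<mu>s \<mu> \<longleftrightarrow> (\<forall>f::'a \<Rightarrow> real. continuous_on UNIV f \<longrightarrow>
       compact (closure {x. f x \<noteq> 0}) \<longrightarrow>
       (\<lambda>n. signed_integral (\<mu>s n) f) \<longlonglongrightarrow> signed_integral \<mu> f)"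

end

theory Submission
  imports Defs
begin

(* Weak convergence of both variations gives vague convergence, and testing against the constant 1
   gives convergence of the total variations.

   Conversely, an almost-Hahn set, inner regularity of |mu| and Urysohn's lemma give a compactly
   supported continuous h with |h| <= 1 whose sign defect
     D(h) = int (1 - h) dmu+ + int (1 + h) dmu- = ||mu|| - int h dmu
   is small.  Vague convergence and limsup ||mu_n|| <= ||mu|| keep D_n(h) eventually small too.
   As |int f dmu_n+ - int f h+ dmu_n| <= sup |f| * D_n(h) and f h+ has compact support, vague
   convergence yields weak convergence of the positive parts; for the negative parts use -h. *)

section \<open>Jordan decomposition of a finite signed measure\<close>

lemma ennreal_cSUP:
  "bdd_above (f ` A) \<Longrightarrow> A \<noteq> {} \<Longrightarrow> ennreal (SUP x\<in>A. f x) = (SUP x\<in>A. ennreal (f x))"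
  using continuous_at_Sup_mono[of ennreal "f ` A"]
  by (simp add: image_image mono_def ennreal_leI continuous_at_imp_continuous_at_within
      continuous_on_ennreal continuous_on_eq_continuous_at)

lemma signed_measure_uminus: "signed_measure \<mu> \<Longrightarrow> signed_measure (\<lambda>A. - \<mu> A)"
  unfolding signed_measure_def by (auto intro: sums_minus)

definition pos_variation :: "('a::topological_space set \<Rightarrow> real) \<Rightarrow> 'a set \<Rightarrow> real" where
  "pos_variation \<mu> A = (SUP B\<in>{B\<in>sets borel. B \<subseteq> A}. \<mu> B)"

lemma sets_pos_part [simp]: "sets (pos_part \<mu>) = sets borel"
proof -
  have "sigma_sets UNIV (sets borel) = sets (borel :: 'a measure)"
    using sets.sigma_sets_eq[of borel] by simp
  then show ?thesis
    unfolding pos_part_def by (subst sets_measure_of) auto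
qed

lemma space_pos_part [simp]: "space (pos_part \<mu>) = UNIV"
  unfolding pos_part_def by (simp add: space_measure_of_conv)

lemma sets_neg_part [simp]: "sets (neg_part \<mu>) = sets borel"
  by (simp add: neg_part_def)

lemma space_neg_part [simp]: "space (neg_part \<mu>) = UNIV"
  by (simp add: neg_part_def)

definition unbounded_on :: "('a::topological_space set \<Rightarrow> real) \<Rightarrow> 'a set \<Rightarrow> bool" where
  "unbounded_on \<mu> E \<longleftrightarrow> (\<forall>c. \<exists>A\<in>sets borel. A \<subseteq> E \<and> c < \<bar>\<mu> A\<bar>)"

context
  fixes \<mu> :: "'a::topological_space set \<Rightarrow> real"
  assumes \<mu>: "signed_measure \<mu>"
begin

lemma signed_measure_empty: "\<mu> {} = 0"
  using \<mu> unfolding signed_measure_def by blast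

lemma signed_measure_sums:
  "range A \<subseteq> sets borel \<Longrightarrow> disjoint_family A \<Longrightarrow> (\<lambda>n. \<mu> (A n)) sums \<mu> (\<Union>n. A n)"
  using \<mu> unfolding signed_measure_def by blast

lemma signed_measure_Un:
  assumes "A \<in> sets borel" "B \<in> sets borel" "A \<inter> B = {}"
  shows "\<mu> (A \<union> B) = \<mu> A + \<mu> B"
proof -
  have "range (binaryset A B) \<subseteq> sets borel" "disjoint_family (binaryset A B)"
    using assms by (auto simp: range_binaryset_eq disjoint_family_on_def binaryset_def)
  then have "(\<lambda>n. \<mu> (binaryset A B n)) sums \<mu> (A \<union> B)"
    using signed_measure_sums UN_binaryset_eq by metis
  then show ?thesis
    using suminf_binaryset_eq[of \<mu> A B] signed_measure_empty sums_unique by metis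
qed

lemma signed_measure_Diff:
  assumes "A \<in> sets borel" "B \<in> sets borel" "B \<subseteq> A"
  shows "\<mu> (A - B) = \<mu> A - \<mu> B"
proof -
  have "\<mu> ((A - B) \<union> B) = \<mu> (A - B) + \<mu> B"
    using assms by (intro signed_measure_Un) auto
  with assms(3) show ?thesis
    by (simp add: Un_absorb2)
qed

lemma unbounded_on_Diff:
  assumes "unbounded_on \<mu> E" "B \<in> sets borel" "B \<subseteq> E"
  shows "unbounded_on \<mu> B \<or> unbounded_on \<mu> (E - B)"
proof (rule ccontr)
  assume "\<not> ?thesis"
  then obtain c1 c2 where
    c1: "\<And>A. A \<in> sets borel \<Longrightarrow> A \<subseteq> B \<Longrightarrow> \<bar>\<mu> A\<bar> \<le> c1" and
    c2: "\<And>A. A \<in> sets borel \<Longrightarrow> A \<subseteq> E - B \<Longrightarrow> \<bar>\<mu> A\<bar> \<le> c2"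
    unfolding unbounded_on_def by (meson not_le)
  have "\<bar>\<mu> A\<bar> \<le> c1 + c2" if "A \<in> sets borel" "A \<subseteq> E" for A
  proof -
    have "\<mu> A = \<mu> (A \<inter> B) + \<mu> (A - B)"
      using signed_measure_Un[of "A \<inter> B" "A - B"] that assms(2) by (simp add: Int_Diff_Un Int_Diff_disjoint)
    moreover have "\<bar>\<mu> (A \<inter> B)\<bar> \<le> c1" "\<bar>\<mu> (A - B)\<bar> \<le> c2"
      using c1[of "A \<inter> B"] c2[of "A - B"] that assms(2) by auto
    ultimately show ?thesis by linarith
  qed
  then show False
    using assms(1) unfolding unbounded_on_def by (meson not_le)
qed

lemma unbounded_on_split:
  assumes E: "E \<in> sets borel" "unbounded_on \<mu> E"
  shows "\<exists>E'. (E' \<in> sets borel \<and> unbounded_on \<mu> E') \<and> E' \<subseteq> E \<and> 1 \<le> \<bar>\<mu> (E - E')\<bar>"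
proof -
  obtain B where B: "B \<in> sets borel" "B \<subseteq> E" "\<bar>\<mu> E\<bar> + 1 < \<bar>\<mu> B\<bar>"
    using E(2) unfolding unbounded_on_def by blast
  from unbounded_on_Diff[OF E(2) B(1,2)] show ?thesis
  proof
    assume "unbounded_on \<mu> B"
    moreover have "\<mu> (E - B) = \<mu> E - \<mu> B"
      using signed_measure_Diff E B by blast
    ultimately show ?thesis
      using B by (intro exI[of _ B]) auto
  next
    assume "unbounded_on \<mu> (E - B)"
    moreover have "E - (E - B) = B"
      using B by blast
    ultimately show ?thesis
      using B E by (intro exI[of _ "E - B"]) auto
  qed
qed

lemma signed_measure_bounded: "\<exists>c. \<forall>A\<in>sets borel. \<bar>\<mu> A\<bar> \<le> c"
proof (rule ccontr)
  assume "\<not> ?thesis"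
  then have "unbounded_on \<mu> UNIV"
    by (auto simp: unbounded_on_def not_le)
  have "\<exists>E. \<forall>n. (E n \<in> sets borel \<and> unbounded_on \<mu> (E n)) \<and>
      E (Suc n) \<subseteq> E n \<and> 1 \<le> \<bar>\<mu> (E n - E (Suc n))\<bar>"
    using \<open>unbounded_on \<mu> UNIV\<close> unbounded_on_split by (intro dependent_nat_choice) auto
  then obtain E where E: "\<And>n. E n \<in> sets borel \<and> unbounded_on \<mu> (E n)"
    and E_Suc: "\<And>n. E (Suc n) \<subseteq> E n \<and> 1 \<le> \<bar>\<mu> (E n - E (Suc n))\<bar>"
    by blast
  define F where "F = (\<lambda>n. E n - E (Suc n))"
  have "disjoint_family (\<lambda>n. - E (Suc n) - - E n)"
    using E_Suc by (intro disjoint_family_Suc) blast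
  then have "disjoint_family F"
    by (simp add: F_def Diff_eq Int_commute)
  then have "(\<lambda>n. \<mu> (F n)) sums \<mu> (\<Union>n. F n)"
    using E by (intro signed_measure_sums) (auto simp: F_def)
  then have "(\<lambda>n. \<mu> (F n)) \<longlonglongrightarrow> 0"
    using summable_LIMSEQ_zero sums_summable by blast
  then obtain n where "\<bar>\<mu> (F n)\<bar> < 1"
    using LIMSEQ_D[of _ 0 1] by fastforce
  with E_Suc[of n] show False
    by (simp add: F_def)
qed

lemma bdd_above_signed_measure: "bdd_above (\<mu> ` {B\<in>sets borel. B \<subseteq> A})"
  using signed_measure_bounded by (auto simp: bdd_above_def) (meson abs_ge_self order_trans)

lemma pos_variation_upper: "B \<in> sets borel \<Longrightarrow> B \<subseteq> A \<Longrightarrow> \<mu> B \<le> pos_variation \<mu> A"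
  unfolding pos_variation_def by (rule cSUP_upper) (auto intro: bdd_above_signed_measure)

lemma pos_variation_least:
  "(\<And>B. B \<in> sets borel \<Longrightarrow> B \<subseteq> A \<Longrightarrow> \<mu> B \<le> x) \<Longrightarrow> pos_variation \<mu> A \<le> x"
  unfolding pos_variation_def by (rule cSUP_least) auto

lemma pos_variation_nonneg: "0 \<le> pos_variation \<mu> A"
  using pos_variation_upper[of "{}" A] signed_measure_empty by simp

lemma pos_variation_empty: "pos_variation \<mu> {} = 0"
  using pos_variation_nonneg[of "{}"] pos_variation_least[of "{}" 0] signed_measure_empty by force

lemma pos_variation_mono: "A \<subseteq> A' \<Longrightarrow> pos_variation \<mu> A \<le> pos_variation \<mu> A'"
  by (rule pos_variation_least) (auto intro: pos_variation_upper)

lemma pos_variation_Un_ge: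
  assumes "A \<inter> A' = {}"
  shows "pos_variation \<mu> A + pos_variation \<mu> A' \<le> pos_variation \<mu> (A \<union> A')"
proof -
  have sum_le: "\<mu> B \<le> pos_variation \<mu> (A \<union> A') - \<mu> B'"
    if "B \<in> sets borel" "B \<subseteq> A" "B' \<in> sets borel" "B' \<subseteq> A'" for B B'
  proof -
    have "\<mu> (B \<union> B') = \<mu> B + \<mu> B'"
      using that assms by (intro signed_measure_Un) auto
    moreover have "\<mu> (B \<union> B') \<le> pos_variation \<mu> (A \<union> A')"
      using that by (intro pos_variation_upper) auto
    ultimately show ?thesis by simp
  qed
  have "\<mu> B' \<le> pos_variation \<mu> (A \<union> A') - pos_variation \<mu> A"
    if "B' \<in> sets borel" "B' \<subseteq> A'" for B'
  proof -
    have "pos_variation \<mu> A \<le> pos_variation \<mu> (A \<union> A') - \<mu> B'"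
      using sum_le that by (intro pos_variation_least)
    then show ?thesis by simp
  qed
  then have "pos_variation \<mu> A' \<le> pos_variation \<mu> (A \<union> A') - pos_variation \<mu> A"
    by (rule pos_variation_least)
  then show ?thesis by simp
qed

lemma pos_variation_sum_le:
  fixes A :: "nat \<Rightarrow> 'a set"
  assumes "disjoint_family A"
  shows "(\<Sum>i<n. pos_variation \<mu> (A i)) \<le> pos_variation \<mu> (\<Union>i<n. A i)"
proof (induction n)
  case 0
  then show ?case by (simp add: pos_variation_empty)
next
  case (Suc n)
  have "A i \<inter> A n = {}" if "i < n" for i
    using disjoint_family_onD[OF assms] that by simp
  then have "(\<Union>i<n. A i) \<inter> A n = {}"
    by blast
  moreover have "(\<Union>i<Suc n. A i) = (\<Union>i<n. A i) \<union> A n"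
    by (auto simp: lessThan_Suc)
  ultimately show ?case
    using pos_variation_Un_ge[of "\<Union>i<n. A i" "A n"] Suc by simp
qed

lemma pos_variation_sums:
  fixes A :: "nat \<Rightarrow> 'a set"
  assumes A: "range A \<subseteq> sets borel" "disjoint_family A"
  shows "(\<lambda>i. pos_variation \<mu> (A i)) sums pos_variation \<mu> (\<Union>i. A i)"
proof -
  have partial: "(\<Sum>i<n. pos_variation \<mu> (A i)) \<le> pos_variation \<mu> (\<Union>i. A i)" for n
  proof -
    have "pos_variation \<mu> (\<Union>i<n. A i) \<le> pos_variation \<mu> (\<Union>i. A i)"
      by (rule pos_variation_mono) auto
    with pos_variation_sum_le[OF A(2), of n] show ?thesis
      by linarith
  qed
  have summable: "summable (\<lambda>i. pos_variation \<mu> (A i))"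
    by (rule summableI_nonneg_bounded[OF pos_variation_nonneg partial])
  have "pos_variation \<mu> (\<Union>i. A i) \<le> (\<Sum>i. pos_variation \<mu> (A i))"
  proof (rule pos_variation_least)
    fix B assume B: "B \<in> sets borel" "B \<subseteq> (\<Union>i. A i)"
    have "(\<lambda>i. \<mu> (B \<inter> A i)) sums \<mu> (\<Union>i. B \<inter> A i)"
      using A B by (intro signed_measure_sums) (auto simp: disjoint_family_on_def)
    moreover have "(\<Union>i. B \<inter> A i) = B"
      using B by auto
    moreover have "\<mu> (B \<inter> A i) \<le> pos_variation \<mu> (A i)" for i
      using A B by (intro pos_variation_upper) auto
    ultimately show "\<mu> B \<le> (\<Sum>i. pos_variation \<mu> (A i))"
      using summable by (metis sums_unique sums_summable suminf_le)
  qed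
  with suminf_le_const[OF summable partial]
  have "(\<Sum>i. pos_variation \<mu> (A i)) = pos_variation \<mu> (\<Union>i. A i)"
    by (rule antisym)
  with summable_sums[OF summable] show ?thesis
    by simp
qed

lemma emeasure_pos_part:
  assumes "A \<in> sets borel"
  shows "emeasure (pos_part \<mu>) A = ennreal (pos_variation \<mu> A)"
proof -
  have ennreal_SUP: "(SUP B\<in>{B\<in>sets borel. B \<subseteq> X}. ennreal (\<mu> B)) = ennreal (pos_variation \<mu> X)" for X
    unfolding pos_variation_def
    by (rule ennreal_cSUP[OF bdd_above_signed_measure, symmetric]) (use sets.empty_sets in blast)
  \<comment> \<open>\<open>measure_of\<close> yields the null measure unless the set function is countably additive.\<close>
  have "countably_additive (sets borel) (\<lambda>A. ennreal (pos_variation \<mu> A))"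
    unfolding countably_additive_def
  proof (intro allI impI)
    fix A :: "nat \<Rightarrow> 'a set" assume "range A \<subseteq> sets borel" "disjoint_family A"
    then have "(\<lambda>i. pos_variation \<mu> (A i)) sums pos_variation \<mu> (\<Union>i. A i)"
      by (rule pos_variation_sums)
    then show "(\<Sum>i. ennreal (pos_variation \<mu> (A i))) = ennreal (pos_variation \<mu> (\<Union>i. A i))"
      by (metis suminf_ennreal2 pos_variation_nonneg sums_summable sums_unique)
  qed
  then show ?thesis
    unfolding pos_part_def ennreal_SUP using assms sets.sigma_algebra_axioms[of borel]
    by (intro emeasure_measure_of_sigma) (auto simp: positive_def pos_variation_empty)
qed

lemma finite_measure_pos_part: "finite_measure (pos_part \<mu>)"
  by (rule finite_measureI) (simp add: emeasure_pos_part)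

lemma measure_pos_part: "A \<in> sets borel \<Longrightarrow> measure (pos_part \<mu>) A = pos_variation \<mu> A"
  by (simp add: measure_def emeasure_pos_part pos_variation_nonneg)

end

lemma finite_measure_neg_part: "signed_measure \<mu> \<Longrightarrow> finite_measure (neg_part \<mu>)"
  unfolding neg_part_def by (rule finite_measure_pos_part[OF signed_measure_uminus])

lemma signed_measure_eq_pos_part_minus_neg_part:
  assumes \<mu>: "signed_measure \<mu>" and A: "A \<in> sets borel"
  shows "\<mu> A = measure (pos_part \<mu>) A - measure (neg_part \<mu>) A"
proof -
  have \<mu>': "signed_measure (\<lambda>A. - \<mu> A)"
    using \<mu> by (rule signed_measure_uminus)
  have "\<mu> B \<le> \<mu> A + pos_variation (\<lambda>A. - \<mu> A) A" "- \<mu> B \<le> pos_variation \<mu> A - \<mu> A"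
    if "B \<in> sets borel" "B \<subseteq> A" for B
    using signed_measure_Diff[OF \<mu> A that(1,2)] pos_variation_upper[OF \<mu>, of "A - B" A]
      pos_variation_upper[OF \<mu>', of "A - B" A] that A by auto
  then have "pos_variation \<mu> A \<le> \<mu> A + pos_variation (\<lambda>A. - \<mu> A) A"
    "pos_variation (\<lambda>A. - \<mu> A) A \<le> pos_variation \<mu> A - \<mu> A"
    by (auto intro!: pos_variation_least[OF \<mu>] pos_variation_least[OF \<mu>'])
  then show ?thesis
    using A by (simp add: measure_pos_part[OF \<mu>] measure_pos_part[OF \<mu>'] neg_part_def)
qed

lemma signed_measure_almost_Hahn_set:
  assumes \<mu>: "signed_measure \<mu>" and "0 < \<epsilon>"
  shows "\<exists>B\<in>sets borel. measure (pos_part \<mu>) (UNIV - B) + measure (neg_part \<mu>) B < \<epsilon>"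
proof -
  have "\<exists>B\<in>sets borel. pos_variation \<mu> UNIV - \<epsilon> < \<mu> B"
  proof (rule ccontr)
    assume "\<not> ?thesis"
    then have "pos_variation \<mu> UNIV \<le> pos_variation \<mu> UNIV - \<epsilon>"
      by (intro pos_variation_least[OF \<mu>]) (auto simp: not_less)
    with \<open>0 < \<epsilon>\<close> show False by simp
  qed
  then obtain B where B: "B \<in> sets borel" "pos_variation \<mu> UNIV - \<epsilon> < \<mu> B" ..
  have "measure (pos_part \<mu>) (UNIV - B) = measure (pos_part \<mu>) UNIV - measure (pos_part \<mu>) B"
    using finite_measure.finite_measure_compl[OF finite_measure_pos_part[OF \<mu>], of B] B(1) by simp
  moreover have "measure (pos_part \<mu>) UNIV = pos_variation \<mu> UNIV"
    by (simp add: measure_pos_part[OF \<mu>])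
  moreover have "\<mu> B = measure (pos_part \<mu>) B - measure (neg_part \<mu>) B"
    using \<mu> B(1) by (rule signed_measure_eq_pos_part_minus_neg_part)
  ultimately have "measure (pos_part \<mu>) (UNIV - B) + measure (neg_part \<mu>) B < \<epsilon>"
    using B(2) by linarith
  with B(1) show ?thesis ..
qed

lemma integrable_bounded_borel:
  fixes u :: "'a::topological_space \<Rightarrow> real"
  assumes "finite_measure M" "sets M = sets borel" "u \<in> borel_measurable borel" "\<And>x. \<bar>u x\<bar> \<le> b"
  shows "integrable M u"
proof -
  have "u \<in> borel_measurable M"
    using assms(3) by (simp add: measurable_cong_sets[OF assms(2) refl])
  with assms(1,4) show ?thesis
    by (intro finite_measure.integrable_const_bound[where B = b]) auto
qed

lemma abs_integral_le_integral:
  fixes f g :: "'a \<Rightarrow> real"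
  assumes "integrable M f" "integrable M g" "\<And>x. \<bar>f x\<bar> \<le> g x"
  shows "\<bar>integral\<^sup>L M f\<bar> \<le> integral\<^sup>L M g"
proof -
  have "\<bar>integral\<^sup>L M f\<bar> \<le> (\<integral>x. \<bar>f x\<bar> \<partial>M)"
    using integral_norm_bound[of M f] by simp
  also have "\<dots> \<le> integral\<^sup>L M g"
    using assms by (intro integral_mono) auto
  finally show ?thesis .
qed

text \<open>For \<open>\<bar>h\<bar> \<le> 1\<close> the sign defect is nonnegative; it is small iff \<open>h\<close> is close to \<open>1\<close>
  on \<open>P\<close> and to \<open>-1\<close> on \<open>N\<close>, i.e. to the sign function of the Jordan decomposition \<open>P - N\<close>.\<close>

definition sign_defect :: "'a measure \<Rightarrow> 'a measure \<Rightarrow> ('a \<Rightarrow> real) \<Rightarrow> real" where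
  "sign_defect P N h = (\<integral>x. 1 - h x \<partial>P) + (\<integral>x. 1 + h x \<partial>N)"

lemma sign_defect_uminus: "sign_defect N P (\<lambda>x. - h x) = sign_defect P N h"
  by (simp add: sign_defect_def)

lemma sign_defect_eq:
  assumes "finite_measure P" "finite_measure N" "integrable P h" "integrable N h"
  shows "sign_defect P N h = measure P (space P) + measure N (space N) - ((\<integral>x. h x \<partial>P) - (\<integral>x. h x \<partial>N))"
proof -
  have "integrable P (\<lambda>x. 1::real)" "integrable N (\<lambda>x. 1::real)"
    using assms(1,2) by (auto intro: finite_measure.integrable_const)
  with assms(3,4) show ?thesis
    by (simp add: sign_defect_def)
qed

lemma abs_cutoff_le:
  fixes a t B :: real
  assumes a: "\<bar>a\<bar> \<le> B" and t: "\<bar>t\<bar> \<le> 1"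
  shows "\<bar>a * max t 0\<bar> \<le> B" "\<bar>a * max t 0\<bar> \<le> B * (1 + t)" "\<bar>a - a * max t 0\<bar> \<le> B * (1 - t)"
proof -
  have "\<bar>a * max t 0\<bar> \<le> B \<and> \<bar>a * max t 0\<bar> \<le> B * (1 + t) \<and> \<bar>a - a * max t 0\<bar> \<le> B * (1 - t)"
  proof (cases "0 \<le> t")
    case True
    have "\<bar>a\<bar> * t \<le> \<bar>a\<bar>"
      using t by (intro mult_left_le) (auto simp: abs_le_iff)
    moreover have "\<bar>a * t\<bar> \<le> B * (1 + t)" "\<bar>a * (1 - t)\<bar> \<le> B * (1 - t)"
      using a t True by (auto simp: abs_mult intro!: mult_mono)
    ultimately show ?thesis
      using a True by (simp add: abs_mult right_diff_distrib)
  next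
    case False
    have "B * 1 \<le> B * (1 - t)" "0 \<le> B * (1 + t)"
      using a t False by (intro mult_left_mono mult_nonneg_nonneg; simp add: abs_le_iff)+
    with a False show ?thesis
      by simp
  qed
  then show "\<bar>a * max t 0\<bar> \<le> B" "\<bar>a * max t 0\<bar> \<le> B * (1 + t)" "\<bar>a - a * max t 0\<bar> \<le> B * (1 - t)"
    by auto
qed

lemma abs_integral_diff_cutoff_le:
  fixes f h :: "'a::topological_space \<Rightarrow> real"
  assumes P: "finite_measure P" "sets P = sets borel" and N: "finite_measure N" "sets N = sets borel"
    and f: "f \<in> borel_measurable borel" "\<And>x. \<bar>f x\<bar> \<le> B"
    and h: "h \<in> borel_measurable borel" "\<And>x. \<bar>h x\<bar> \<le> 1"
  defines "g \<equiv> \<lambda>x. f x * max (h x) 0"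
  shows "\<bar>(\<integral>x. f x \<partial>P) - ((\<integral>x. g x \<partial>P) - (\<integral>x. g x \<partial>N))\<bar> \<le> B * sign_defect P N h"
proof -
  have bounds: "\<bar>g x\<bar> \<le> B" "\<bar>g x\<bar> \<le> B * (1 + h x)" "\<bar>f x - g x\<bar> \<le> B * (1 - h x)" for x
    unfolding g_def using f(2)[of x] h(2)[of x] by (rule abs_cutoff_le)+
  have int: "integrable P u" "integrable N u"
    if "u \<in> borel_measurable borel" "\<And>x. \<bar>u x\<bar> \<le> c" for u :: "'a \<Rightarrow> real" and c
    using integrable_bounded_borel[OF P that] integrable_bounded_borel[OF N that] by auto
  have meas: "g \<in> borel_measurable borel" "(\<lambda>x. 1 - h x) \<in> borel_measurable borel"
    "(\<lambda>x. 1 + h x) \<in> borel_measurable borel"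
    using f(1) h(1) unfolding g_def by measurable
  have two: "\<bar>1 - h x\<bar> \<le> 2" "\<bar>1 + h x\<bar> \<le> 2" for x
    using h(2)[of x] by (auto simp: abs_le_iff)
  have int_f_g: "integrable P f" "integrable P g" "integrable N g"
    "integrable P (\<lambda>x. 1 - h x)" "integrable N (\<lambda>x. 1 + h x)"
    using int[OF f] int[OF meas(1) bounds(1)] int[OF meas(2) two(1)] int[OF meas(3) two(2)] by simp_all
  have "\<bar>\<integral>x. f x - g x \<partial>P\<bar> \<le> (\<integral>x. B * (1 - h x) \<partial>P)"
    using int_f_g bounds(3) by (intro abs_integral_le_integral integrable_mult_right) auto
  moreover have "\<bar>\<integral>x. g x \<partial>N\<bar> \<le> (\<integral>x. B * (1 + h x) \<partial>N)"
    using int_f_g bounds(2) by (intro abs_integral_le_integral integrable_mult_right) auto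
  moreover have "(\<integral>x. f x - g x \<partial>P) = (\<integral>x. f x \<partial>P) - (\<integral>x. g x \<partial>P)"
    using int_f_g by (intro Bochner_Integration.integral_diff) auto
  moreover have "\<bar>(\<integral>x. f x \<partial>P) - ((\<integral>x. g x \<partial>P) - (\<integral>x. g x \<partial>N))\<bar>
      \<le> \<bar>(\<integral>x. f x \<partial>P) - (\<integral>x. g x \<partial>P)\<bar> + \<bar>\<integral>x. g x \<partial>N\<bar>"
    using abs_triangle_ineq[of "(\<integral>x. f x \<partial>P) - (\<integral>x. g x \<partial>P)" "\<integral>x. g x \<partial>N"] by simp
  ultimately have "\<bar>(\<integral>x. f x \<partial>P) - ((\<integral>x. g x \<partial>P) - (\<integral>x. g x \<partial>N))\<bar>
      \<le> B * (\<integral>x. 1 - h x \<partial>P) + B * (\<integral>x. 1 + h x \<partial>N)"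
    by simp
  then show ?thesis
    by (simp add: sign_defect_def distrib_left)
qed

lemma integral_one_minus_le_measure_compl:
  fixes h :: "'a::topological_space \<Rightarrow> real"
  assumes M: "finite_measure M" "sets M = sets borel"
    and h: "h \<in> borel_measurable borel" "\<And>x. \<bar>h x\<bar> \<le> 1"
    and K: "K \<in> sets borel" "\<And>x. x \<in> K \<Longrightarrow> h x = 1"
  shows "(\<integral>x. 1 - h x \<partial>M) \<le> 2 * measure M (UNIV - K)"
proof -
  have "(\<integral>x. 1 - h x \<partial>M) \<le> (\<integral>x. 2 * indicator (UNIV - K) x \<partial>M)"
  proof (rule integral_mono)
    show "integrable M (\<lambda>x. 1 - h x)"
      using h by (intro integrable_bounded_borel[OF M, where b = 2]) (auto simp: abs_le_iff)
    show "integrable M (\<lambda>x. 2 * indicator (UNIV - K) x :: real)"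
      using K(1) M by (intro integrable_mult_right integrable_real_indicator)
        (auto simp: finite_measure.emeasure_finite less_top[symmetric])
    show "1 - h x \<le> 2 * indicator (UNIV - K) x" for x
      using h(2)[of x] K(2)[of x] by (auto simp: indicator_def abs_le_iff)
  qed
  then show ?thesis
    using K(1) M(2) by (simp add: sets_eq_imp_space_eq[OF M(2)])
qed

lemma sign_defect_le_measure_compl:
  fixes h :: "'a::topological_space \<Rightarrow> real"
  assumes P: "finite_measure P" "sets P = sets borel" and N: "finite_measure N" "sets N = sets borel"
    and h: "h \<in> borel_measurable borel" "\<And>x. \<bar>h x\<bar> \<le> 1"
    and K: "K1 \<in> sets borel" "K2 \<in> sets borel" "\<And>x. x \<in> K1 \<Longrightarrow> h x = 1" "\<And>x. x \<in> K2 \<Longrightarrow> h x = -1"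
  shows "sign_defect P N h \<le> 2 * measure P (UNIV - K1) + 2 * measure N (UNIV - K2)"
  using integral_one_minus_le_measure_compl[OF P h K(1,3)]
    integral_one_minus_le_measure_compl[OF N, of "\<lambda>x. - h x" K2] h K(2,4)
  by (simp add: sign_defect_def)

section \<open>Compactly supported continuous functions\<close>

lemma compact_closure_subset: "compact (closure S) \<Longrightarrow> T \<subseteq> S \<Longrightarrow> compact (closure T)"
  by (metis Int_absorb1 closed_closure closure_mono compact_Int_closed)

lemma bounded_range_compact_support:
  fixes f :: "'a::topological_space \<Rightarrow> real"
  assumes "continuous_on UNIV f" "compact (closure {x. f x \<noteq> 0})"
  shows "bounded (range f)"
proof -
  have "bounded (f ` closure {x. f x \<noteq> 0})"
    using assms by (intro compact_imp_bounded compact_continuous_image) (auto intro: continuous_on_subset)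
  moreover have "range f \<subseteq> insert 0 (f ` closure {x. f x \<noteq> 0})"
    using closure_subset by fastforce
  ultimately show ?thesis
    by (metis bounded_insert bounded_subset)
qed

lemma compact_support_cutoff:
  fixes K :: "'a::metric_space set"
  assumes lc: "locally_compact_space (euclidean :: 'a topology)" and K: "compact K"
  obtains \<phi> :: "'a \<Rightarrow> real" where "continuous_on UNIV \<phi>" "compact (closure {x. \<phi> x \<noteq> 0})"
    "\<And>x. \<phi> x \<in> {0..1}" "\<And>x. x \<in> K \<Longrightarrow> \<phi> x = 1"
proof -
  have "compactin euclidean K"
    using K by (simp add: compactin_euclidean_iff)
  then obtain U L where UL: "openin euclidean U" "compact L" "closed L" "K \<subseteq> U" "U \<subseteq> L"
    using lc locally_compact_space_compact_closed_compact[of euclidean] Hausdorff_space_euclidean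
    unfolding compactin_euclidean_iff closed_closedin by metis
  have "normal_space (euclidean :: 'a topology)"
    by (simp add: metrizable_imp_normal_space metrizable_space_euclidean)
  then obtain \<phi> where \<phi>: "continuous_map euclidean (top_of_set {0..1::real}) \<phi>"
    "\<phi> ` (UNIV - U) \<subseteq> {0}" "\<phi> ` K \<subseteq> {1}"
  proof (rule Urysohn_lemma[of euclidean "UNIV - U" K 0 1])
    show "closedin euclidean (UNIV - U)" "closedin euclidean K"
      using UL(1) K by (auto intro: compact_imp_closed)
    show "disjnt (UNIV - U) K"
      using UL(4) by (auto simp: disjnt_def)
  qed auto
  show ?thesis
  proof (rule that[of \<phi>])
    show "continuous_on UNIV \<phi>" "\<phi> x \<in> {0..1}" for x
      using \<phi>(1) by (auto simp: continuous_map_in_subtopology)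
    show "x \<in> K \<Longrightarrow> \<phi> x = 1" for x
      using \<phi>(3) by auto
    have "{x. \<phi> x \<noteq> 0} \<subseteq> L"
      using \<phi>(2) UL(5) by auto
    then show "compact (closure {x. \<phi> x \<noteq> 0})"
      using UL(2,3) by (metis closure_minimal closed_closure compact_Int_closed Int_absorb1)
  qed
qed

lemma Urysohn_compact_support:
  fixes K1 K2 :: "'a::metric_space set"
  assumes lc: "locally_compact_space (euclidean :: 'a topology)"
    and K: "compact K1" "compact K2" "K1 \<inter> K2 = {}"
  obtains h :: "'a \<Rightarrow> real" where "continuous_on UNIV h" "compact (closure {x. h x \<noteq> 0})"
    "\<And>x. \<bar>h x\<bar> \<le> 1" "\<And>x. x \<in> K1 \<Longrightarrow> h x = 1" "\<And>x. x \<in> K2 \<Longrightarrow> h x = -1"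
proof -
  have "normal_space (euclidean :: 'a topology)"
    by (simp add: metrizable_imp_normal_space metrizable_space_euclidean)
  then obtain f where f: "continuous_map euclidean (top_of_set {-1..1::real}) f"
    "f ` K2 \<subseteq> {-1}" "f ` K1 \<subseteq> {1}"
    using Urysohn_lemma[of euclidean K2 K1 "-1" 1] K
    by (auto simp: disjnt_def compact_imp_closed Int_commute)
  obtain \<phi> :: "'a \<Rightarrow> real" where \<phi>: "continuous_on UNIV \<phi>" "compact (closure {x. \<phi> x \<noteq> 0})"
    "\<And>x. \<phi> x \<in> {0..1}" "\<And>x. x \<in> K1 \<union> K2 \<Longrightarrow> \<phi> x = 1"
    using compact_support_cutoff[OF lc compact_Un[OF K(1,2)]] by blast
  have f_cont: "continuous_on UNIV f" and f_range: "\<And>x. f x \<in> {-1..1}"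
    using f(1) by (auto simp: continuous_map_in_subtopology)
  show ?thesis
  proof (rule that[of "\<lambda>x. f x * \<phi> x"])
    show "continuous_on UNIV (\<lambda>x. f x * \<phi> x)"
      using f_cont \<phi>(1) by (intro continuous_intros)
    show "compact (closure {x. f x * \<phi> x \<noteq> 0})"
      using \<phi>(2) by (rule compact_closure_subset) auto
    show "\<bar>f x * \<phi> x\<bar> \<le> 1" for x
      using f_range[of x] \<phi>(3)[of x] by (auto simp: abs_mult intro!: mult_le_one)
    show "x \<in> K1 \<Longrightarrow> f x * \<phi> x = 1" "x \<in> K2 \<Longrightarrow> f x * \<phi> x = -1" for x
      using f(2,3) \<phi>(4)[of x] by auto
  qed
qed

section \<open>Approximating the sign of a Radon measure\<close>

lemma inner_regular_compact_approx:
  fixes P N :: "'a::t2_space measure"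
  assumes P: "finite_measure P" "sets P = sets borel" and N: "finite_measure N" "sets N = sets borel"
    and A: "A \<in> sets borel"
    and inner: "emeasure P A + emeasure N A = (SUP K\<in>{K. K \<subseteq> A \<and> compact K}. emeasure P K + emeasure N K)"
    and "0 < \<epsilon>"
  shows "\<exists>K. compact K \<and> K \<subseteq> A \<and> measure P (A - K) + measure N (A - K) < \<epsilon>"
proof (cases "measure P A + measure N A < \<epsilon>")
  case True
  then show ?thesis by (intro exI[of _ "{}"]) auto
next
  case False
  have emeasure_sum: "emeasure P X + emeasure N X = ennreal (measure P X + measure N X)" for X
    using finite_measure.emeasure_eq_measure[OF P(1)] finite_measure.emeasure_eq_measure[OF N(1)]
    by (simp add: ennreal_plus)
  have "ennreal (measure P A + measure N A - \<epsilon>) < ennreal (measure P A + measure N A)"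
    using False \<open>0 < \<epsilon>\<close> by (intro ennreal_lessI) auto
  also have "\<dots> = (SUP K\<in>{K. K \<subseteq> A \<and> compact K}. emeasure P K + emeasure N K)"
    using inner emeasure_sum[of A] by simp
  finally obtain K where K: "K \<subseteq> A" "compact K"
    "ennreal (measure P A + measure N A - \<epsilon>) < emeasure P K + emeasure N K"
    by (auto simp: less_SUP_iff)
  then have "ennreal (measure P A + measure N A - \<epsilon>) < ennreal (measure P K + measure N K)"
    using emeasure_sum[of K] by metis
  then have "measure P A + measure N A - \<epsilon> < measure P K + measure N K"
    using False by (subst (asm) ennreal_less_iff) auto
  moreover have "K \<in> sets borel"
    using K(2) by (simp add: compact_imp_closed borel_closed)
  then have "measure P (A - K) = measure P A - measure P K" "measure N (A - K) = measure N A - measure N K"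
    using finite_measure.finite_measure_Diff[OF P(1), of A K] finite_measure.finite_measure_Diff[OF N(1), of A K]
      A K(1) P(2) N(2) by auto
  ultimately show ?thesis
    using K by (intro exI[of _ K]) auto
qed

lemma signed_radon_compact_Hahn_approx:
  fixes \<mu> :: "'a::t2_space set \<Rightarrow> real"
  assumes \<mu>: "signed_radon \<mu>" and "0 < \<epsilon>"
  shows "\<exists>K1 K2. compact K1 \<and> compact K2 \<and> K1 \<inter> K2 = {} \<and>
    measure (pos_part \<mu>) (UNIV - K1) + measure (neg_part \<mu>) (UNIV - K2) < \<epsilon>"
proof -
  define P N where "P = pos_part \<mu>" and "N = neg_part \<mu>"
  have sm: "signed_measure \<mu>"
    using \<mu> by (simp add: signed_radon_def)
  have PN: "finite_measure P" "sets P = sets borel" "finite_measure N" "sets N = sets borel"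
    using finite_measure_pos_part[OF sm] finite_measure_neg_part[OF sm] by (simp_all add: P_def N_def)
  have inner: "emeasure P A + emeasure N A = (SUP K\<in>{K. K \<subseteq> A \<and> compact K}. emeasure P K + emeasure N K)"
    if "A \<in> sets borel" for A
    using \<mu> that by (simp add: signed_radon_def P_def N_def)
  have "0 < \<epsilon> / 3"
    using \<open>0 < \<epsilon>\<close> by simp
  then obtain B where B: "B \<in> sets borel" "measure P (UNIV - B) + measure N B < \<epsilon> / 3"
    using signed_measure_almost_Hahn_set[OF sm \<open>0 < \<epsilon> / 3\<close>] unfolding P_def N_def by blast
  have B': "UNIV - B \<in> sets borel"
    using B(1) by simp
  obtain K1 where K1: "compact K1" "K1 \<subseteq> B" "measure P (B - K1) + measure N (B - K1) < \<epsilon> / 3"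
    using inner_regular_compact_approx[OF PN B(1) inner[OF B(1)] \<open>0 < \<epsilon> / 3\<close>] by blast
  obtain K2 where K2: "compact K2" "K2 \<subseteq> UNIV - B"
    "measure P (UNIV - B - K2) + measure N (UNIV - B - K2) < \<epsilon> / 3"
    using inner_regular_compact_approx[OF PN B' inner[OF B'] \<open>0 < \<epsilon> / 3\<close>] by blast
  have "UNIV - K1 = (UNIV - B) \<union> (B - K1)" "UNIV - K2 = B \<union> (UNIV - B - K2)"
    using K1(2) K2(2) by auto
  then have "measure P (UNIV - K1) = measure P (UNIV - B) + measure P (B - K1)"
    "measure N (UNIV - K2) = measure N B + measure N (UNIV - B - K2)"
    using B(1) K1(1) K2(1) PN
    by (auto simp: compact_imp_closed borel_closed intro!: finite_measure.finite_measure_Union)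
  then have "measure P (UNIV - K1) + measure N (UNIV - K2) < \<epsilon>"
    using B(2) K1(3) K2(3) measure_nonneg[of N "B - K1"] measure_nonneg[of P "UNIV - B - K2"] by linarith
  moreover have "K1 \<inter> K2 = {}"
    using K1(2) K2(2) by blast
  ultimately show ?thesis
    using K1(1) K2(1) unfolding P_def N_def by blast
qed

lemma signed_radon_sign_defect_small:
  fixes \<mu> :: "'a::metric_space set \<Rightarrow> real"
  assumes lc: "locally_compact_space (euclidean :: 'a topology)" and \<mu>: "signed_radon \<mu>" and "0 < \<epsilon>"
  shows "\<exists>h. continuous_on UNIV h \<and> compact (closure {x. h x \<noteq> 0}) \<and> (\<forall>x. \<bar>h x\<bar> \<le> 1) \<and>
    sign_defect (pos_part \<mu>) (neg_part \<mu>) h \<le> \<epsilon>"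
proof -
  have sm: "signed_measure \<mu>"
    using \<mu> by (simp add: signed_radon_def)
  obtain K1 K2 where K: "compact K1" "compact K2" "K1 \<inter> K2 = {}"
    and small: "measure (pos_part \<mu>) (UNIV - K1) + measure (neg_part \<mu>) (UNIV - K2) < \<epsilon> / 2"
    using signed_radon_compact_Hahn_approx[OF \<mu>, of "\<epsilon> / 2"] \<open>0 < \<epsilon>\<close> by auto
  obtain h :: "'a \<Rightarrow> real" where h: "continuous_on UNIV h" "compact (closure {x. h x \<noteq> 0})"
    "\<And>x. \<bar>h x\<bar> \<le> 1" "\<And>x. x \<in> K1 \<Longrightarrow> h x = 1" "\<And>x. x \<in> K2 \<Longrightarrow> h x = -1"
    using Urysohn_compact_support[OF lc K] by blast
  have "sign_defect (pos_part \<mu>) (neg_part \<mu>) h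
      \<le> 2 * measure (pos_part \<mu>) (UNIV - K1) + 2 * measure (neg_part \<mu>) (UNIV - K2)"
    using finite_measure_pos_part[OF sm] finite_measure_neg_part[OF sm] h K(1,2)
    by (intro sign_defect_le_measure_compl borel_measurable_continuous_onI)
      (auto simp: compact_imp_closed borel_closed)
  with small h show ?thesis
    by (intro exI[of _ h]) auto
qed

section \<open>From vague to weak convergence\<close>

lemma eventually_sign_defect_less:
  fixes P N :: "'a::topological_space measure" and Ps Ns :: "nat \<Rightarrow> 'a measure"
  assumes P: "finite_measure P" "sets P = sets borel" and N: "finite_measure N" "sets N = sets borel"
    and Ps: "\<And>n. finite_measure (Ps n)" "\<And>n. sets (Ps n) = sets borel"
    and Ns: "\<And>n. finite_measure (Ns n)" "\<And>n. sets (Ns n) = sets borel"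
    and h: "h \<in> borel_measurable borel" "\<And>x. \<bar>h x\<bar> \<le> 1"
    and conv: "(\<lambda>n. (\<integral>x. h x \<partial>Ps n) - (\<integral>x. h x \<partial>Ns n)) \<longlonglongrightarrow> (\<integral>x. h x \<partial>P) - (\<integral>x. h x \<partial>N)"
    and mass: "limsup (\<lambda>n. ereal (measure (Ps n) UNIV + measure (Ns n) UNIV))
      \<le> ereal (measure P UNIV + measure N UNIV)"
    and "0 < \<epsilon>"
  shows "eventually (\<lambda>n. sign_defect (Ps n) (Ns n) h < sign_defect P N h + \<epsilon>) sequentially"
proof -
  have defect: "sign_defect M M' h = measure M UNIV + measure M' UNIV - ((\<integral>x. h x \<partial>M) - (\<integral>x. h x \<partial>M'))"
    if "finite_measure M" "sets M = sets borel" "finite_measure M'" "sets M' = sets borel" for M M'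
  proof -
    have "integrable M h" "integrable M' h"
      using that h by (auto intro: integrable_bounded_borel)
    moreover have "space M = UNIV" "space M' = UNIV"
      using sets_eq_imp_space_eq[of M borel] sets_eq_imp_space_eq[of M' borel] that by simp_all
    ultimately show ?thesis
      using sign_defect_eq[of M M' h] that by simp
  qed
  have "limsup (\<lambda>n. ereal (measure (Ps n) UNIV + measure (Ns n) UNIV))
      < ereal (measure P UNIV + measure N UNIV + \<epsilon> / 2)"
    using mass \<open>0 < \<epsilon>\<close> by (simp add: le_less_trans)
  then have "eventually (\<lambda>n. measure (Ps n) UNIV + measure (Ns n) UNIV
      < measure P UNIV + measure N UNIV + \<epsilon> / 2) sequentially"
    by (auto dest: Limsup_lessD)
  moreover have "eventually (\<lambda>n. dist ((\<integral>x. h x \<partial>Ps n) - (\<integral>x. h x \<partial>Ns n))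
      ((\<integral>x. h x \<partial>P) - (\<integral>x. h x \<partial>N)) < \<epsilon> / 2) sequentially"
    using conv \<open>0 < \<epsilon>\<close> by (intro tendstoD) auto
  ultimately show ?thesis
  proof eventually_elim
    case (elim n)
    then show ?case
      using defect[OF P N] defect[OF Ps(1,2) Ns(1,2), of n n] unfolding dist_real_def by linarith
  qed
qed

lemma dist_integral_le_sign_defect:
  fixes f h :: "'a::topological_space \<Rightarrow> real"
  assumes P: "finite_measure P" "sets P = sets borel" and N: "finite_measure N" "sets N = sets borel"
    and P': "finite_measure P'" "sets P' = sets borel" and N': "finite_measure N'" "sets N' = sets borel"
    and f: "f \<in> borel_measurable borel" "\<And>x. \<bar>f x\<bar> \<le> B"
    and h: "h \<in> borel_measurable borel" "\<And>x. \<bar>h x\<bar> \<le> 1"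
  defines "g \<equiv> \<lambda>x. f x * max (h x) 0"
  shows "dist (\<integral>x. f x \<partial>P') (\<integral>x. f x \<partial>P)
    \<le> B * sign_defect P' N' h + B * sign_defect P N h
      + dist ((\<integral>x. g x \<partial>P') - (\<integral>x. g x \<partial>N')) ((\<integral>x. g x \<partial>P) - (\<integral>x. g x \<partial>N))"
  using abs_integral_diff_cutoff_le[OF P N f h] abs_integral_diff_cutoff_le[OF P' N' f h]
  unfolding g_def dist_real_def by linarith

lemma weak_conv_of_vague_conv_sign_defect:
  fixes P N :: "'a::topological_space measure" and Ps Ns :: "nat \<Rightarrow> 'a measure"
  assumes P: "finite_measure P" "sets P = sets borel" and N: "finite_measure N" "sets N = sets borel"
    and Ps: "\<And>n. finite_measure (Ps n)" "\<And>n. sets (Ps n) = sets borel"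
    and Ns: "\<And>n. finite_measure (Ns n)" "\<And>n. sets (Ns n) = sets borel"
    and vague: "\<And>f :: 'a \<Rightarrow> real. continuous_on UNIV f \<Longrightarrow> compact (closure {x. f x \<noteq> 0}) \<Longrightarrow>
      (\<lambda>n. (\<integral>x. f x \<partial>Ps n) - (\<integral>x. f x \<partial>Ns n)) \<longlonglongrightarrow> (\<integral>x. f x \<partial>P) - (\<integral>x. f x \<partial>N)"
    and mass: "limsup (\<lambda>n. ereal (measure (Ps n) UNIV + measure (Ns n) UNIV))
      \<le> ereal (measure P UNIV + measure N UNIV)"
    and sign: "\<And>\<epsilon>. 0 < \<epsilon> \<Longrightarrow> \<exists>h. continuous_on UNIV h \<and> compact (closure {x. h x \<noteq> 0}) \<and>
      (\<forall>x. \<bar>h x\<bar> \<le> 1) \<and> sign_defect P N h \<le> \<epsilon>"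
  shows "weak_conv Ps P"
  unfolding weak_conv_def
proof (intro allI impI tendstoI)
  fix f :: "'a \<Rightarrow> real" and r :: real
  assume f: "continuous_on UNIV f" "bounded (range f)" and "0 < r"
  obtain B where B: "0 < B" "\<And>x. \<bar>f x\<bar> \<le> B"
    using f(2) by (auto simp: bounded_pos)
  define \<delta> where "\<delta> = r / (4 * B + 2)"
  have "0 < \<delta>" "(4 * B + 1) * \<delta> < r"
    using B(1) \<open>0 < r\<close> by (simp_all add: \<delta>_def field_simps)
  then have "B * (4 * \<delta>) + \<delta> < r"
    by (simp add: algebra_simps)
  from \<open>0 < \<delta>\<close> obtain h where h: "continuous_on UNIV h" "compact (closure {x. h x \<noteq> 0})" "\<And>x. \<bar>h x\<bar> \<le> 1"
    and defect: "sign_defect P N h \<le> \<delta>"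
    using sign by blast
  define g where "g = (\<lambda>x. f x * max (h x) 0)"
  have g_cont: "continuous_on UNIV g"
    unfolding g_def using f(1) h(1) by (intro continuous_intros)
  have g_supp: "compact (closure {x. g x \<noteq> 0})"
    using h(2) by (rule compact_closure_subset) (auto simp: g_def)
  have meas: "f \<in> borel_measurable borel" "h \<in> borel_measurable borel"
    using f(1) h(1) by (simp_all add: borel_measurable_continuous_onI)
  have "eventually (\<lambda>n. sign_defect (Ps n) (Ns n) h < sign_defect P N h + 2 * \<delta>) sequentially"
    using P N Ps Ns meas(2) h(3) vague[OF h(1,2)] mass \<open>0 < \<delta>\<close> by (intro eventually_sign_defect_less) auto
  moreover have "eventually (\<lambda>n. dist ((\<integral>x. g x \<partial>Ps n) - (\<integral>x. g x \<partial>Ns n))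
      ((\<integral>x. g x \<partial>P) - (\<integral>x. g x \<partial>N)) < \<delta>) sequentially"
    using vague[OF g_cont g_supp] \<open>0 < \<delta>\<close> by (rule tendstoD)
  ultimately show "eventually (\<lambda>n. dist (\<integral>x. f x \<partial>Ps n) (\<integral>x. f x \<partial>P) < r) sequentially"
  proof eventually_elim
    case (elim n)
    have "sign_defect (Ps n) (Ns n) h + sign_defect P N h \<le> 4 * \<delta>"
      using elim(1) defect by linarith
    then have "B * sign_defect (Ps n) (Ns n) h + B * sign_defect P N h \<le> B * (4 * \<delta>)"
      using B(1) by (simp add: mult_left_mono flip: distrib_left)
    with dist_integral_le_sign_defect[OF P N Ps(1,2) Ns(1,2) meas(1) B(2) meas(2) h(3), of n n]
      elim(2) \<open>B * (4 * \<delta>) + \<delta> < r\<close> show ?case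
      unfolding g_def by linarith
  qed
qed

lemma weak_conv_pos_neg_of_vague_conv:
  fixes P N :: "'a::topological_space measure" and Ps Ns :: "nat \<Rightarrow> 'a measure"
  assumes P: "finite_measure P" "sets P = sets borel" and N: "finite_measure N" "sets N = sets borel"
    and Ps: "\<And>n. finite_measure (Ps n)" "\<And>n. sets (Ps n) = sets borel"
    and Ns: "\<And>n. finite_measure (Ns n)" "\<And>n. sets (Ns n) = sets borel"
    and vague: "\<And>f :: 'a \<Rightarrow> real. continuous_on UNIV f \<Longrightarrow> compact (closure {x. f x \<noteq> 0}) \<Longrightarrow>
      (\<lambda>n. (\<integral>x. f x \<partial>Ps n) - (\<integral>x. f x \<partial>Ns n)) \<longlonglongrightarrow> (\<integral>x. f x \<partial>P) - (\<integral>x. f x \<partial>N)"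
    and mass: "limsup (\<lambda>n. ereal (measure (Ps n) UNIV + measure (Ns n) UNIV))
      \<le> ereal (measure P UNIV + measure N UNIV)"
    and sign: "\<And>\<epsilon>. 0 < \<epsilon> \<Longrightarrow> \<exists>h. continuous_on UNIV h \<and> compact (closure {x. h x \<noteq> 0}) \<and>
      (\<forall>x. \<bar>h x\<bar> \<le> 1) \<and> sign_defect P N h \<le> \<epsilon>"
  shows "weak_conv Ps P \<and> weak_conv Ns N"
proof
  show "weak_conv Ps P"
    by (rule weak_conv_of_vague_conv_sign_defect[OF assms])
  show "weak_conv Ns N"
  proof (rule weak_conv_of_vague_conv_sign_defect[OF N P Ns Ps])
    show "(\<lambda>n. (\<integral>x. f x \<partial>Ns n) - (\<integral>x. f x \<partial>Ps n)) \<longlonglongrightarrow> (\<integral>x. f x \<partial>N) - (\<integral>x. f x \<partial>P)"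
      if "continuous_on UNIV f" "compact (closure {x. f x \<noteq> 0})" for f :: "'a \<Rightarrow> real"
      using tendsto_minus[OF vague[OF that]] by simp
    show "limsup (\<lambda>n. ereal (measure (Ns n) UNIV + measure (Ps n) UNIV))
        \<le> ereal (measure N UNIV + measure P UNIV)"
      using mass by (simp add: add.commute)
    show "\<exists>h. continuous_on UNIV h \<and> compact (closure {x. h x \<noteq> 0}) \<and>
        (\<forall>x. \<bar>h x\<bar> \<le> 1) \<and> sign_defect N P h \<le> \<epsilon>" if \<epsilon>: "0 < \<epsilon>" for \<epsilon>
    proof -
      obtain h where "continuous_on UNIV h" "compact (closure {x. h x \<noteq> 0})" "\<forall>x. \<bar>h x\<bar> \<le> 1"
        "sign_defect P N h \<le> \<epsilon>"
        using sign[OF \<epsilon>] by blast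
      then show ?thesis
        by (intro exI[of _ "\<lambda>x. - h x"]) (auto intro: continuous_intros simp: sign_defect_uminus)
    qed
  qed
qed

lemma vague_conv_of_weak_conv:
  assumes "weak_conv (\<lambda>n. pos_part (\<mu>s n)) (pos_part \<mu>)" "weak_conv (\<lambda>n. neg_part (\<mu>s n)) (neg_part \<mu>)"
  shows "vague_conv \<mu>s \<mu>"
  unfolding vague_conv_def signed_integral_def
proof (intro allI impI)
  fix f :: "'a \<Rightarrow> real"
  assume "continuous_on UNIV f" "compact (closure {x. f x \<noteq> 0})"
  moreover from this have "bounded (range f)"
    by (rule bounded_range_compact_support)
  ultimately show "(\<lambda>n. (\<integral>x. f x \<partial>pos_part (\<mu>s n)) - (\<integral>x. f x \<partial>neg_part (\<mu>s n)))
      \<longlonglongrightarrow> (\<integral>x. f x \<partial>pos_part \<mu>) - (\<integral>x. f x \<partial>neg_part \<mu>)"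
    using assms unfolding weak_conv_def by (intro tendsto_diff) auto
qed

lemma limsup_tv_norm_of_weak_conv:
  assumes "weak_conv (\<lambda>n. pos_part (\<mu>s n)) (pos_part \<mu>)" "weak_conv (\<lambda>n. neg_part (\<mu>s n)) (neg_part \<mu>)"
  shows "limsup (\<lambda>n. ereal (tv_norm (\<mu>s n))) = ereal (tv_norm \<mu>)"
proof -
  have "(\<lambda>n. measure (pos_part (\<mu>s n)) UNIV) \<longlonglongrightarrow> measure (pos_part \<mu>) UNIV"
    "(\<lambda>n. measure (neg_part (\<mu>s n)) UNIV) \<longlonglongrightarrow> measure (neg_part \<mu>) UNIV"
    using assms[unfolded weak_conv_def, rule_format, of "\<lambda>x. 1"] by simp_all
  then have "(\<lambda>n. ereal (tv_norm (\<mu>s n))) \<longlonglongrightarrow> ereal (tv_norm \<mu>)"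
    unfolding tv_norm_def lim_ereal by (rule tendsto_add)
  then show ?thesis
    by (intro lim_imp_Limsup) auto
qed

theorem proposition2p8:
  fixes \<mu>s :: "nat \<Rightarrow> 'a::metric_space set \<Rightarrow> real" and \<mu> :: "'a set \<Rightarrow> real"
  assumes "locally_compact_space (euclidean :: 'a topology)"
    and "\<And>n. signed_radon (\<mu>s n)"
    and "signed_radon \<mu>"
  shows "(weak_conv (\<lambda>n. pos_part (\<mu>s n)) (pos_part \<mu>) \<and>
          weak_conv (\<lambda>n. neg_part (\<mu>s n)) (neg_part \<mu>))
     \<longleftrightarrow> (vague_conv \<mu>s \<mu> \<and> limsup (\<lambda>n. ereal (tv_norm (\<mu>s n))) \<le> ereal (tv_norm \<mu>))"
proof
  assume "weak_conv (\<lambda>n. pos_part (\<mu>s n)) (pos_part \<mu>) \<and> weak_conv (\<lambda>n. neg_part (\<mu>s n)) (neg_part \<mu>)"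
  then show "vague_conv \<mu>s \<mu> \<and> limsup (\<lambda>n. ereal (tv_norm (\<mu>s n))) \<le> ereal (tv_norm \<mu>)"
    using vague_conv_of_weak_conv limsup_tv_norm_of_weak_conv by fastforce
next
  have "signed_measure (\<mu>s n)" "signed_measure \<mu>" for n
    using assms(2,3) by (simp_all add: signed_radon_def)
  moreover assume "vague_conv \<mu>s \<mu> \<and> limsup (\<lambda>n. ereal (tv_norm (\<mu>s n))) \<le> ereal (tv_norm \<mu>)"
  ultimately show "weak_conv (\<lambda>n. pos_part (\<mu>s n)) (pos_part \<mu>) \<and> weak_conv (\<lambda>n. neg_part (\<mu>s n)) (neg_part \<mu>)"
    using signed_radon_sign_defect_small[OF assms(1,3)]
    by (intro weak_conv_pos_neg_of_vague_conv)
      (auto simp: vague_conv_def signed_integral_def tv_norm_def finite_measure_pos_part finite_measure_neg_part)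
qed

end
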